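(* Let $w_1,\dots,w_n$ be positive integers with $\sum_{i\in[n]}w_i=3t+1$ for some integer $t$, and let $g$ be a positive integer such that the adjustment $f_g$ is $t$-bounded for $(w_1,\dots,w_n)$. Set $d_i=f_g(w_i)/g$ for $i\in[n]$. Then for every partition $(A,B)$ of $[n]$ (i.e. $A\cup B=[n]$, $A\cap B=\emptyset$) with $\sum_{i\in A}w_i>2\sum_{i\in B}w_i$, it holds that $\sum_{i\in A}d_i>\sum_{i\in B}d_i$; that is, $(w_1,\dots,w_n)\mapsto(d_1,\dots,d_n)$ is a qualified allocation.
   Context: For a positive integer $g$, the adjustment $f_g$ maps a positive integer $w$ to $w-(w\bmod g)$ if $w\bmod g<g/2$, and to $w+g-(w\bmod g)$ otherwise; thus $f_g(w)$ is a non-negative multiple of $g$. The adjustment $f_g$ is called $t$-bounded for $(w_1,\dots,w_n)$ if $\sum_{i\in[n]}|w_i-f_g(w_i)|\le t$. A map sending $(w_1,\dots,w_n)$ to non-negative integers $(d_1,\dots,d_n)$ is a qualified allocation if for every partition $(A,B)$ of $[n]$ with $\sum_{i\in A}w_i>2\sum_{i\in B}w_i$ one has $\sum_{i\in A}d_i>\sum_{i\in B}d_i$. *)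

theory Defs
  imports Main
begin

text \<open>The adjustment f_g: rounds w to the nearest multiple of g (ties rounded up).
  The condition (w mod g) < g/2 is written 2 * (w mod g) < g.\<close>
definition adj :: "nat \<Rightarrow> nat \<Rightarrow> nat" where
  "adj g w = (if 2 * (w mod g) < g then w - w mod g else w + g - w mod g)"

definition t_bounded :: "nat \<Rightarrow> int \<Rightarrow> nat \<Rightarrow> (nat \<Rightarrow> nat) \<Rightarrow> bool" where
  "t_bounded g t n w \<longleftrightarrow> (\<Sum>i\<in>{1..n}. \<bar>int (w i) - int (adj g (w i))\<bar>) \<le> t"

definition qualified_allocation :: "nat \<Rightarrow> (nat \<Rightarrow> nat) \<Rightarrow> (nat \<Rightarrow> nat) \<Rightarrow> bool" where
  "qualified_allocation n w d \<longleftrightarrow>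
     (\<forall>A B. A \<union> B = {1..n} \<and> A \<inter> B = {} \<and>
        (\<Sum>i\<in>A. w i) > 2 * (\<Sum>i\<in>B. w i) \<longrightarrow> (\<Sum>i\<in>A. d i) > (\<Sum>i\<in>B. d i))"

end

theory Submission
  imports Defs
begin

text \<open>Write W, F for the total weights and the total adjusted weights of A and B.
  Since W(A) > 2 W(B) and W(A) + W(B) = 3t + 1, the part B has weight at most t and
  W(A) - W(B) = 3t + 1 - 2 W(B) \<ge> t + 1. Adjusting moves W(A) - W(B) by at most the total
  adjustment error, which is at most t, so F(A) > F(B) survives. All adjusted weights are
  multiples of g, so dividing by g keeps the strict inequality.\<close>

lemma dvd_adj: "g dvd adj g w"
proof -
  have "w - w mod g = g * (w div g)"
    by (simp add: minus_mod_eq_mult_div)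
  moreover have "w + g - w mod g = g * (w div g) + g"
    using mod_less_eq_dividend [of w g] by (simp add: minus_mod_eq_mult_div [symmetric])
  ultimately show ?thesis
    by (simp add: adj_def)
qed

lemma sum_div_of_dvd:
  fixes f :: "'a \<Rightarrow> 'b::euclidean_semiring_cancel"
  assumes "finite A" and "\<forall>a\<in>A. b dvd f a"
  shows "(\<Sum>a\<in>A. f a div b) = (\<Sum>a\<in>A. f a) div b"
proof -
  have "A \<inter> {a. b dvd f a} = A" and "A \<inter> {a. \<not> b dvd f a} = {}"
    using assms(2) by auto
  then show ?thesis
    using sum_div_partition [OF assms(1), of f b] by simp
qed

lemma abs_sum_diff_le: "\<bar>sum f A - sum h A\<bar> \<le> (\<Sum>a\<in>A. \<bar>f a - h a\<bar>)"
  for f h :: "'a \<Rightarrow> 'b::ordered_ab_group_add_abs"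
  by (metis sum_abs sum_subtractf)

lemma two_thirds_majority_survives_perturbation:
  fixes a b a' b' t :: int
  assumes "a > 2 * b" and "a + b = 3 * t + 1" and "\<bar>a - a'\<bar> + \<bar>b - b'\<bar> \<le> t"
  shows "a' > b'"
  using assms by linarith

theorem mainTheorem3:
  fixes n g :: nat and w :: "nat \<Rightarrow> nat" and t :: int
  assumes wpos: "\<forall>i\<in>{1..n}. w i > 0"
    and wsum: "int (\<Sum>i\<in>{1..n}. w i) = 3 * t + 1"
    and gpos: "g > 0"
    and bnd: "t_bounded g t n w"
  shows "qualified_allocation n w (\<lambda>i. adj g (w i) div g)"
  unfolding qualified_allocation_def
proof (intro allI impI, elim conjE)
  fix A B :: "nat set"
  assume cover: "A \<union> B = {1..n}" and disj: "A \<inter> B = {}"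
    and maj: "(\<Sum>i\<in>A. w i) > 2 * (\<Sum>i\<in>B. w i)"
  define W where "W S = (\<Sum>i\<in>S. int (w i))" for S
  define F where "F S = (\<Sum>i\<in>S. int (adj g (w i)))" for S
  have fin: "finite A" "finite B"
    using cover by (metis finite_Un finite_atLeastAtMost)+
  have split: "sum h {1..n} = sum h A + sum h B" for h :: "nat \<Rightarrow> int"
    using cover disj fin by (metis sum.union_disjoint)
  have W_int: "W S = int (\<Sum>i\<in>S. w i)" for S
    by (simp add: W_def)
  have "W A > 2 * W B"
    unfolding W_int using maj by linarith
  moreover have "W A + W B = 3 * t + 1"
    using wsum split [of "\<lambda>i. int (w i)"] by (simp add: W_def)
  moreover have "\<bar>W S - F S\<bar> \<le> (\<Sum>i\<in>S. \<bar>int (w i) - int (adj g (w i))\<bar>)" for S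
    unfolding W_def F_def by (rule abs_sum_diff_le)
  then have "\<bar>W A - F A\<bar> + \<bar>W B - F B\<bar> \<le> t"
    using bnd unfolding t_bounded_def split by (meson add_mono order_trans)
  ultimately have "F A > F B"
    by (rule two_thirds_majority_survives_perturbation)
  then have "(\<Sum>i\<in>B. adj g (w i)) < (\<Sum>i\<in>A. adj g (w i))"
    unfolding F_def by (simp only: of_nat_less_iff flip: of_nat_sum)
  then show "(\<Sum>i\<in>B. adj g (w i) div g) < (\<Sum>i\<in>A. adj g (w i) div g)"
    using gpos fin by (simp add: sum_div_of_dvd dvd_adj div_less_mono dvd_sum flip: dvd_eq_mod_eq_0)
qed

end
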